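(* Let $n\ge 5$ and let $G$ be a tree on $n$ vertices with $G\not\cong P_n$. Then $\mathrm{irr}_t(G)\ge 4n-10$. Equality holds if and only if the degree sequence of $G$ is $(3,2,\ldots,2,1,1,1)$, i.e. $G$ has exactly one vertex of degree $3$, exactly $n-4$ vertices of degree $2$ and exactly $3$ vertices of degree $1$.
   Context: For a graph $G=(V,E)$ and $w\in V$, $d_G(w)$ is the degree of $w$. The total irregularity is $\mathrm{irr}_t(G)=\frac12\sum_{x,y\in V}|d_G(x)-d_G(y)|$, where the sum runs over all ordered pairs of vertices. $P_n$ is the path on $n$ vertices. Degree sequences are listed in nonincreasing order. *)

theory Defs
  imports Complex_Main
begin

definition simple_graph :: "'a set \<Rightarrow> 'a set set \<Rightarrow> bool" where
  "simple_graph V E \<longleftrightarrow> finite V \<and> (\<forall>e\<in>E. e \<subseteq> V \<and> card e = 2)"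

definition adj :: "'a set set \<Rightarrow> 'a \<Rightarrow> 'a \<Rightarrow> bool" where
  "adj E x y \<longleftrightarrow> {x, y} \<in> E"

definition degree :: "'a set set \<Rightarrow> 'a \<Rightarrow> nat" where
  "degree E v = card {e \<in> E. v \<in> e}"

definition connected_graph :: "'a set \<Rightarrow> 'a set set \<Rightarrow> bool" where
  "connected_graph V E \<longleftrightarrow> (\<forall>x\<in>V. \<forall>y\<in>V. (adj E)\<^sup>*\<^sup>* x y)"

definition is_cycle :: "'a set set \<Rightarrow> 'a list \<Rightarrow> bool" where
  "is_cycle E cs \<longleftrightarrow> length cs \<ge> 3 \<and> distinct cs \<and>
     (\<forall>i. Suc i < length cs \<longrightarrow> adj E (cs ! i) (cs ! Suc i)) \<and>
     adj E (last cs) (hd cs)"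

definition acyclic_graph :: "'a set set \<Rightarrow> bool" where
  "acyclic_graph E \<longleftrightarrow> (\<nexists>cs. is_cycle E cs)"

definition tree :: "'a set \<Rightarrow> 'a set set \<Rightarrow> bool" where
  "tree V E \<longleftrightarrow> simple_graph V E \<and> V \<noteq> {} \<and> connected_graph V E \<and> acyclic_graph E"

text \<open>G is isomorphic to the path P_n on n = card V vertices.\<close>
definition is_path_graph :: "'a set \<Rightarrow> 'a set set \<Rightarrow> bool" where
  "is_path_graph V E \<longleftrightarrow> (\<exists>f. bij_betw f {0..<card V} V \<and>
     E = {{f i, f (Suc i)} | i. Suc i < card V})"

definition irr_t :: "'a set \<Rightarrow> 'a set set \<Rightarrow> real" where
  "irr_t V E = (1/2) * (\<Sum>x\<in>V. \<Sum>y\<in>V. \<bar>real (degree E x) - real (degree E y)\<bar>)"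

end

theory Submission
  imports Defs
begin

(* Combinatorial half: in a tree on n vertices every degree is at least 1 (n >= 2),
   the degrees sum to 2(n - 1) (handshake lemma plus |E| = n - 1, proved by removing a
   leaf), and a tree whose degrees are all at most 2 is a path (a maximum simple path
   spans the tree and, by acyclicity, has no chords).  Hence a non-path tree has a
   vertex of degree at least 3.

   Arithmetic half: for any positive degree sequence d with sum 2(n - 1) and a term
   >= 3, write S for the total excess sum (d v - 2).  Then the number of ones is S + 2.
   Bounding |d x - d y| from below only by the pairs involving a 1 or a 2 gives
   irr_t >= (S + 2)(n - 2) + n_2 S; for S >= 2 this exceeds 4n - 10, while S = 1 forces
   the degree sequence (3, 2, ..., 2, 1, 1, 1) and the lower bound is then exact. *)

lemma adj_sym: "adj E x y \<longleftrightarrow> adj E y x"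
  unfolding adj_def by (simp add: insert_commute)

lemma adj_endpoints: "simple_graph V E \<Longrightarrow> adj E x y \<Longrightarrow> x \<in> V \<and> y \<in> V \<and> x \<noteq> y"
  unfolding simple_graph_def adj_def by (cases "x = y") auto

lemma finite_edges: "simple_graph V E \<Longrightarrow> finite E"
  unfolding simple_graph_def by (rule finite_subset[of E "Pow V"]) auto

lemma edge_through:
  assumes "simple_graph V E" "e \<in> E" "v \<in> e"
  shows "\<exists>z. z \<noteq> v \<and> e = {v, z}"
proof -
  have "card e = 2" using assms unfolding simple_graph_def by auto
  then obtain a b where "e = {a, b}" "a \<noteq> b" unfolding card_2_iff by blast
  then show ?thesis using assms(3) by (auto simp: insert_commute)
qed

lemma handshake:
  assumes sg: "simple_graph V E"
  shows "(\<Sum>v\<in>V. degree E v) = 2 * card E"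
proof -
  have fV: "finite V" and fE: "finite E" using sg finite_edges simple_graph_def by auto
  have "(\<Sum>v\<in>V. degree E v) = (\<Sum>v\<in>V. \<Sum>e\<in>E. if v \<in> e then 1 else 0)"
    unfolding degree_def by (simp add: sum.inter_filter[OF fE, symmetric])
  also have "\<dots> = (\<Sum>e\<in>E. \<Sum>v\<in>V. if v \<in> e then 1 else 0)" by (rule sum.swap)
  also have "\<dots> = (\<Sum>e\<in>E. 2)"
  proof (rule sum.cong[OF refl])
    fix e assume "e \<in> E"
    then have "e \<subseteq> V" "card e = 2" using sg unfolding simple_graph_def by auto
    then have "{v\<in>V. v \<in> e} = e" by auto
    then show "(\<Sum>v\<in>V. if v \<in> e then 1 else 0) = (2::nat)"
      using \<open>card e = 2\<close> by (simp add: sum.inter_filter[OF fV, symmetric])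
  qed
  finally show ?thesis by simp
qed

lemma connected_has_neighbour:
  assumes "connected_graph V E" "finite V" "card V \<ge> 2" "x \<in> V"
  shows "\<exists>z. adj E x z"
proof -
  have "\<not> (\<forall>a\<in>V. \<forall>b\<in>V. a = b)" using card_le_Suc0_iff_eq[OF assms(2)] assms(3) by auto
  then obtain y where y: "y \<in> V" "y \<noteq> x" using assms(4) by blast
  have "(adj E)\<^sup>*\<^sup>* x y" using assms(1,4) y(1) unfolding connected_graph_def by blast
  then show ?thesis using y(2) by (induction rule: converse_rtranclp_induct) auto
qed

definition spath :: "'a set \<Rightarrow> 'a set set \<Rightarrow> 'a list \<Rightarrow> bool" where
  "spath V E P \<longleftrightarrow> set P \<subseteq> V \<and> distinct P \<and> (\<forall>i. Suc i < length P \<longrightarrow> adj E (P ! i) (P ! Suc i))"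

definition maximum_path :: "'a set \<Rightarrow> 'a set set \<Rightarrow> 'a list \<Rightarrow> bool" where
  "maximum_path V E P \<longleftrightarrow> spath V E P \<and> (\<forall>Q. spath V E Q \<longrightarrow> length Q \<le> length P)"

lemma maximum_path_exists:
  assumes "finite V" "spath V E P0"
  shows "\<exists>P. maximum_path V E P \<and> length P0 \<le> length P"
proof -
  have bound: "\<forall>k. (\<exists>Q. spath V E Q \<and> length Q = k) \<longrightarrow> k \<le> card V"
    unfolding spath_def using assms(1) by (metis card_mono distinct_card)
  obtain k where "\<exists>Q. spath V E Q \<and> length Q = k" "\<forall>l. (\<exists>Q. spath V E Q \<and> length Q = l) \<longrightarrow> l \<le> k"
    using Nat.ex_has_greatest_nat[of "\<lambda>k. \<exists>Q. spath V E Q \<and> length Q = k", OF _ bound] assms(2) by blast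
  then show ?thesis unfolding maximum_path_def using assms(2) by blast
qed

lemma spath_snoc:
  assumes "spath V E P" "P \<noteq> []" "adj E (last P) z" "z \<notin> set P" "z \<in> V"
  shows "spath V E (P @ [z])"
  using assms unfolding spath_def
  by (auto simp: nth_append less_Suc_eq last_conv_nth) (metis One_nat_def diff_Suc_1)

lemma spath_cons:
  assumes "spath V E P" "P \<noteq> []" "adj E z (hd P)" "z \<notin> set P" "z \<in> V"
  shows "spath V E (z # P)"
  using assms unfolding spath_def
  by (auto simp: nth_Cons hd_conv_nth split: nat.split)

lemma maximum_path_end_neighbours:
  assumes sg: "simple_graph V E" and P: "maximum_path V E P" "P \<noteq> []"
  shows "adj E (last P) z \<Longrightarrow> z \<in> set P" and "adj E (hd P) z \<Longrightarrow> z \<in> set P"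
proof -
  have sp: "spath V E P" and max: "\<And>Q. spath V E Q \<Longrightarrow> length Q \<le> length P"
    using P(1) unfolding maximum_path_def by auto
  show "z \<in> set P" if "adj E (last P) z"
  proof (rule ccontr)
    assume "z \<notin> set P"
    then have "spath V E (P @ [z])" using spath_snoc[OF sp P(2) that] adj_endpoints[OF sg that] by blast
    then show False using max by fastforce
  qed
  show "z \<in> set P" if "adj E (hd P) z"
  proof (rule ccontr)
    assume "z \<notin> set P"
    then have "spath V E (z # P)"
      using spath_cons[OF sp P(2)] that adj_endpoints[OF sg that] by (simp add: adj_sym)
    then show False using max by fastforce
  qed
qed

lemma spath_chord_cycle:
  assumes P: "spath V E P" and ij: "i + 2 \<le> j" "j < length P" and chord: "adj E (P ! j) (P ! i)"
  shows "is_cycle E (drop i (take (Suc j) P))"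
proof -
  let ?Q = "drop i (take (Suc j) P)"
  have len: "length ?Q = Suc j - i" using ij by simp
  have nth: "?Q ! k = P ! (i + k)" if "k < length ?Q" for k using that ij by simp
  have "last ?Q = P ! j" using ij len nth[of "j - i"] by (simp add: last_conv_nth)
  moreover have "hd ?Q = P ! i" using ij nth[of 0] len by (simp add: hd_conv_nth)
  moreover have "adj E (?Q ! k) (?Q ! Suc k)" if "Suc k < length ?Q" for k
    using P that len nth[of k] nth[of "Suc k"] ij unfolding spath_def by auto
  moreover have "distinct ?Q" using P unfolding spath_def by simp
  ultimately show ?thesis unfolding is_cycle_def using chord len ij by auto
qed

lemma acyclic_spath_no_chord:
  assumes "acyclic_graph E" "spath V E P" "i < j" "j < length P" "adj E (P ! i) (P ! j)"
  shows "j = Suc i"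
proof (rule ccontr)
  assume "j \<noteq> Suc i"
  then have "is_cycle E (drop i (take (Suc j) P))"
    using assms(2-5) by (intro spath_chord_cycle) (auto simp: adj_sym)
  then show False using assms(1) unfolding acyclic_graph_def by blast
qed

lemma tree_long_maximum_path:
  assumes T: "tree V E" and c: "card V \<ge> 2"
  shows "\<exists>P. maximum_path V E P \<and> length P \<ge> 2"
proof -
  have sg: "simple_graph V E" and fV: "finite V" using T unfolding tree_def simple_graph_def by auto
  obtain x where "x \<in> V" using T unfolding tree_def by blast
  then obtain y where a: "adj E x y"
    using connected_has_neighbour[OF _ fV c] T unfolding tree_def by blast
  have "spath V E [x, y]" using adj_endpoints[OF sg a] a unfolding spath_def by (auto simp: less_Suc_eq)
  then show ?thesis using maximum_path_exists[OF fV] by fastforce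
qed

(* The last vertex v of such a path is a leaf: its only edge goes to its predecessor w,
   since any other neighbour would lie on the path and give a chord. *)
lemma tree_has_leaf:
  assumes T: "tree V E" and c: "card V \<ge> 2"
  shows "\<exists>v w. v \<in> V \<and> {v, w} \<in> E \<and> v \<noteq> w \<and> (\<forall>e\<in>E. v \<in> e \<longrightarrow> e = {v, w})"
proof -
  have sg: "simple_graph V E" and acyc: "acyclic_graph E" using T tree_def by auto
  obtain P where P: "maximum_path V E P" "length P \<ge> 2" using tree_long_maximum_path[OF T c] by blast
  have sp: "spath V E P" using P(1) maximum_path_def by auto
  define L where "L = length P"
  define v where "v = P ! (L - 1)"
  define w where "w = P ! (L - 2)"
  have Pne: "P \<noteq> []" using P(2) by auto
  have last: "last P = v" using Pne unfolding v_def L_def by (simp add: last_conv_nth)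
  have "Suc (L - 2) < L" "Suc (L - 2) = L - 1" using P(2) L_def by auto
  then have aw: "adj E w v" using sp unfolding spath_def v_def w_def L_def by metis
  have vw: "v \<in> V" "v \<noteq> w" using adj_endpoints[OF sg aw] by auto
  have "e = {v, w}" if e: "e \<in> E" "v \<in> e" for e
  proof -
    obtain z where z: "z \<noteq> v" "e = {v, z}" using edge_through[OF sg e] by blast
    have avz: "adj E v z" using e z unfolding adj_def by simp
    then have "z \<in> set P" using maximum_path_end_neighbours(1)[OF sg P(1) Pne] last by simp
    then obtain j where j: "j < L" "P ! j = z" unfolding L_def by (auto simp: in_set_conv_nth)
    have "j < L - 1" using j z(1) v_def by (cases "j = L - 1") auto
    moreover have "L - 1 < L" using P(2) L_def by simp
    moreover have "adj E (P ! j) (P ! (L - 1))" using avz j unfolding v_def by (simp add: adj_sym)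
    ultimately have "L - 1 = Suc j" using acyclic_spath_no_chord[OF acyc sp] L_def by blast
    then have "j = L - 2" by simp
    then show ?thesis using z j w_def by simp
  qed
  moreover have "{v, w} \<in> E" using aw unfolding adj_def by (simp add: insert_commute)
  ultimately show ?thesis using vw by blast
qed

lemma tree_remove_leaf:
  assumes T: "tree V E" and v: "v \<in> V" "{v, w} \<in> E" "v \<noteq> w"
    and leaf: "\<forall>e\<in>E. v \<in> e \<longrightarrow> e = {v, w}"
  shows "tree (V - {v}) (E - {{v, w}})"
proof -
  have sg: "simple_graph V E" using T tree_def by auto
  let ?E = "E - {{v, w}}"
  have wV: "w \<in> V" using sg v unfolding simple_graph_def by auto
  have sg': "simple_graph (V - {v}) ?E" using sg leaf unfolding simple_graph_def by blast
  \<comment> \<open>a walk of the old tree between vertices other than \<open>v\<close> avoids \<open>v\<close>, and a walk to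
      \<open>v\<close> can stop at its only neighbour \<open>w\<close>\<close>
  have walk: "(y = v \<longrightarrow> (adj ?E)\<^sup>*\<^sup>* x w) \<and> (y \<noteq> v \<longrightarrow> (adj ?E)\<^sup>*\<^sup>* x y)"
    if "(adj E)\<^sup>*\<^sup>* x y" "x \<noteq> v" for x y
    using that
  proof (induction rule: rtranclp_induct)
    case base then show ?case by simp
  next
    case (step y z)
    have yz: "y \<noteq> z" using adj_endpoints[OF sg step(2)] by simp
    consider "z = v" | "y = v" | "y \<noteq> v" "z \<noteq> v" by blast
    then show ?case
    proof cases
      case 1
      then have "{y, v} = {v, w}" using leaf step(2) unfolding adj_def by blast
      then show ?thesis using step 1 yz by (auto simp: doubleton_eq_iff)
    next
      case 2
      then have "{v, z} = {v, w}" using leaf step(2) unfolding adj_def by simp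
      then show ?thesis using step 2 yz by (auto simp: doubleton_eq_iff)
    next
      case 3
      then have "adj ?E y z" using step(2) unfolding adj_def by auto
      then show ?thesis using step 3 by (auto intro: rtranclp.rtrancl_into_rtrancl)
    qed
  qed
  have "connected_graph (V - {v}) ?E" unfolding connected_graph_def
  proof (intro ballI)
    fix x y assume "x \<in> V - {v}" "y \<in> V - {v}"
    moreover from this have "(adj E)\<^sup>*\<^sup>* x y" using T unfolding tree_def connected_graph_def by auto
    ultimately show "(adj ?E)\<^sup>*\<^sup>* x y" using walk by auto
  qed
  moreover have "acyclic_graph ?E"
  proof -
    have "is_cycle ?E cs \<Longrightarrow> is_cycle E cs" for cs unfolding is_cycle_def adj_def by auto
    then show ?thesis using T unfolding tree_def acyclic_graph_def by blast
  qed
  moreover have "V - {v} \<noteq> {}" using wV v by auto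
  ultimately show ?thesis using sg' unfolding tree_def by blast
qed

(* A tree on n vertices has n - 1 edges (induction by leaf removal). *)
lemma tree_edge_count: "tree V E \<Longrightarrow> card E = card V - 1"
proof (induction "card V" arbitrary: V E rule: less_induct)
  case less
  have sg: "simple_graph V E" and fV: "finite V" using less.prems unfolding tree_def simple_graph_def by auto
  have "card V \<ge> 1" using less.prems fV unfolding tree_def by (simp add: Suc_le_eq card_gt_0_iff)
  show ?case
  proof (cases "card V \<ge> 2")
    case False
    then have cV: "card V = 1" using \<open>card V \<ge> 1\<close> by simp
    have "e \<notin> E" for e
    proof
      assume "e \<in> E"
      then have "e \<subseteq> V" "card e = 2" using sg unfolding simple_graph_def by auto
      then show False using card_mono[OF fV \<open>e \<subseteq> V\<close>] cV by simp
    qed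
    then have "E = {}" by blast
    then show ?thesis using cV by simp
  next
    case True
    obtain v w where vw: "v \<in> V" "{v, w} \<in> E" "v \<noteq> w" "\<forall>e\<in>E. v \<in> e \<longrightarrow> e = {v, w}"
      using tree_has_leaf[OF less.prems True] by blast
    have "card (V - {v}) < card V" by (rule card_Diff1_less[OF fV vw(1)])
    then have "card (E - {{v, w}}) = card (V - {v}) - 1"
      by (rule less.hyps[OF _ tree_remove_leaf[OF less.prems vw]])
    moreover have "card (E - {{v, w}}) = card E - 1" by (rule card_Diff_singleton[OF vw(2)])
    moreover have "card E > 0" using vw finite_edges[OF sg] card_gt_0_iff by blast
    moreover have "card (V - {v}) = card V - 1" using vw(1) fV by simp
    ultimately show ?thesis using True by linarith
  qed
qed

lemma tree_degree_sum: "tree V E \<Longrightarrow> (\<Sum>v\<in>V. degree E v) = 2 * (card V - 1)"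
  using handshake[of V E] tree_edge_count[of V E] unfolding tree_def by simp

lemma tree_degree_pos:
  assumes T: "tree V E" and c: "card V \<ge> 2" and x: "x \<in> V"
  shows "degree E x \<ge> 1"
proof -
  have sg: "simple_graph V E" and fV: "finite V" and conn: "connected_graph V E"
    using T unfolding tree_def simple_graph_def by auto
  obtain z where "adj E x z" using connected_has_neighbour[OF conn fV c x] by blast
  then have "{x, z} \<in> {e \<in> E. x \<in> e}" unfolding adj_def by auto
  then have "card {e \<in> E. x \<in> e} > 0" using finite_edges[OF sg] card_gt_0_iff by fastforce
  then show ?thesis unfolding degree_def by simp
qed

lemma interior_neighbours:
  assumes sg: "simple_graph V E" and P: "spath V E P" and i: "0 < i" "Suc i < length P"
    and deg: "degree E (P ! i) \<le> 2" and z: "adj E (P ! i) z"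
  shows "z = P ! (i - 1) \<or> z = P ! Suc i"
proof -
  have dist: "distinct P" and adjP: "\<And>k. Suc k < length P \<Longrightarrow> adj E (P ! k) (P ! Suc k)"
    using P unfolding spath_def by auto
  define a where "a = {P ! (i - 1), P ! i}"
  define b where "b = {P ! i, P ! Suc i}"
  have "a \<in> E" using adjP[of "i - 1"] i unfolding a_def adj_def by simp
  moreover have "b \<in> E" using adjP[of i] i unfolding b_def adj_def by simp
  ultimately have sub: "{a, b} \<subseteq> {e \<in> E. P ! i \<in> e}" unfolding a_def b_def by simp
  have ne: "P ! (i - 1) \<noteq> P ! Suc i" "P ! (i - 1) \<noteq> P ! i" "P ! i \<noteq> P ! Suc i"
    using dist i by (simp_all add: nth_eq_iff_index_eq)
  then have "card {a, b} = 2" unfolding a_def b_def by (simp add: doubleton_eq_iff)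
  then have "card {e \<in> E. P ! i \<in> e} \<le> card {a, b}" using deg unfolding degree_def by simp
  then have "{e \<in> E. P ! i \<in> e} = {a, b}"
    using card_seteq[OF _ sub] finite_edges[OF sg] by simp
  moreover have "{P ! i, z} \<in> {e \<in> E. P ! i \<in> e}" using z unfolding adj_def by simp
  moreover have "z \<noteq> P ! i" using adj_endpoints[OF sg z] by auto
  ultimately show ?thesis unfolding a_def b_def using ne by (auto simp: doubleton_eq_iff)
qed

(* If all degrees are at most 2, a maximum path is closed under adjacency and hence,
   by connectivity, contains every vertex of the tree. *)
lemma maximum_path_spans:
  assumes T: "tree V E" and deg: "\<forall>v\<in>V. degree E v \<le> 2"
    and P: "maximum_path V E P" "P \<noteq> []"
  shows "set P = V"
proof
  have sg: "simple_graph V E" and conn: "connected_graph V E" using T tree_def by auto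
  have sp: "spath V E P" using P(1) maximum_path_def by auto
  then show PV: "set P \<subseteq> V" unfolding spath_def by simp
  have closed: "z \<in> set P" if y: "y \<in> set P" and yz: "adj E y z" for y z
  proof -
    obtain i where i: "i < length P" "P ! i = y" using y by (auto simp: in_set_conv_nth)
    consider "i = length P - 1" | "i = 0" | "0 < i" "Suc i < length P" using i(1) by linarith
    then show ?thesis
    proof cases
      case 1
      then have "y = last P" using i P(2) by (simp add: last_conv_nth)
      then show ?thesis using maximum_path_end_neighbours(1)[OF sg P] yz by simp
    next
      case 2
      then have "y = hd P" using i P(2) by (simp add: hd_conv_nth)
      then show ?thesis using maximum_path_end_neighbours(2)[OF sg P] yz by simp
    next
      case 3
      have "degree E (P ! i) \<le> 2" using deg PV i(1) nth_mem by blast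
      then have "z = P ! (i - 1) \<or> z = P ! Suc i"
        using interior_neighbours[OF sg sp 3] yz i(2) by simp
      then show ?thesis using 3 by auto
    qed
  qed
  show "V \<subseteq> set P"
  proof
    fix x assume "x \<in> V"
    moreover have "hd P \<in> set P" using P(2) by simp
    ultimately have "(adj E)\<^sup>*\<^sup>* (hd P) x" using conn PV unfolding connected_graph_def by blast
    then show "x \<in> set P" using \<open>hd P \<in> set P\<close> by (induction rule: rtranclp_induct) (auto intro: closed)
  qed
qed

(* A tree with all degrees at most 2 is a path: enumerate a spanning maximum path;
   its edges are exactly the consecutive pairs because there are no chords. *)
theorem tree_max_degree_two_is_path:
  assumes T: "tree V E" and deg: "\<forall>v\<in>V. degree E v \<le> 2"
  shows "is_path_graph V E"
proof -
  have sg: "simple_graph V E" and fV: "finite V" and acyc: "acyclic_graph E"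
    using T unfolding tree_def simple_graph_def by auto
  obtain x where "x \<in> V" using T unfolding tree_def by blast
  then have "spath V E [x]" unfolding spath_def by simp
  then obtain P where P: "maximum_path V E P" "length P \<ge> 1"
    using maximum_path_exists[OF fV] by fastforce
  then have sp: "spath V E P" and Pne: "P \<noteq> []" unfolding maximum_path_def by auto
  have setP: "set P = V" by (rule maximum_path_spans[OF T deg P(1) Pne])
  have len: "length P = card V" using sp setP distinct_card unfolding spath_def by metis
  have "E = {{P ! i, P ! Suc i} | i. Suc i < card V}"
  proof
    show "{{P ! i, P ! Suc i} | i. Suc i < card V} \<subseteq> E"
      using sp len unfolding spath_def adj_def by auto
    show "E \<subseteq> {{P ! i, P ! Suc i} | i. Suc i < card V}"
    proof
      fix e assume "e \<in> E"
      then have "e \<subseteq> V" "card e = 2" using sg unfolding simple_graph_def by auto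
      then obtain i j where e: "e = {P ! i, P ! j}" "i < j" "j < length P"
        unfolding card_2_iff setP[symmetric]
        by (auto simp: in_set_conv_nth) (metis insert_commute linorder_neqE_nat)
      then have "j = Suc i"
        using acyclic_spath_no_chord[OF acyc sp] \<open>e \<in> E\<close> unfolding adj_def by blast
      then show "e \<in> {{P ! i, P ! Suc i} | i. Suc i < card V}" using e len by auto
    qed
  qed
  moreover have "bij_betw ((!) P) {0..<card V} V"
    using bij_betw_nth sp setP len unfolding spath_def by (metis atLeast0LessThan)
  ultimately show ?thesis unfolding is_path_graph_def by blast
qed

lemma sum_indicator_const:
  "finite A \<Longrightarrow> (\<Sum>x\<in>A. if P x then c else 0) = of_nat (card {x\<in>A. P x}) * (c :: 'b :: comm_semiring_1)"
  by (simp add: sum.inter_filter[symmetric])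

lemma sum_sum_indicator:
  assumes "finite A"
  shows "(\<Sum>x\<in>A. \<Sum>y\<in>B. if P x then f y else 0)
       = of_nat (card {x\<in>A. P x}) * (\<Sum>y\<in>B. f y :: 'b :: comm_semiring_1)"
proof -
  have "(\<Sum>y\<in>B. if P x then f y else 0) = (if P x then sum f B else 0)" for x
    by simp
  then show ?thesis by (simp add: sum_indicator_const[OF assms])
qed

(* The total excess of a degree sequence over 2; degrees 1 and 2 contribute nothing. *)
definition excess :: "('a \<Rightarrow> nat) \<Rightarrow> 'a set \<Rightarrow> nat" where
  "excess d V = (\<Sum>v\<in>V. d v - 2)"

(* A lower bound for |a - b| that only sees pairs involving a 1 or a 2:
   a leaf differs from b by b - 1, a vertex of degree 2 from b >= 3 by b - 2. *)
definition pair_bound :: "nat \<Rightarrow> nat \<Rightarrow> nat" where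
  "pair_bound a b = (if a = 1 then b - 1 else 0) + (if b = 1 then a - 1 else 0)
                  + (if a = 2 then b - 2 else 0) + (if b = 2 then a - 2 else 0)"

lemma pair_bound_le: "a \<ge> 1 \<Longrightarrow> b \<ge> 1 \<Longrightarrow> real (pair_bound a b) \<le> \<bar>real a - real b\<bar>"
  unfolding pair_bound_def by (auto split: if_splits)

lemma pair_bound_eq:
  "a \<ge> 1 \<Longrightarrow> b \<ge> 1 \<Longrightarrow> a \<le> 3 \<Longrightarrow> b \<le> 3 \<Longrightarrow> real (pair_bound a b) = \<bar>real a - real b\<bar>"
  unfolding pair_bound_def by (auto split: if_splits)

(* A positive sequence with sum 2(n - 1) has exactly excess + 2 ones, since
   d + [d = 1] = (d - 2) + 2 for every d >= 1. *)
lemma leaf_count: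
  assumes fin: "finite V" and pos: "\<forall>v\<in>V. d v \<ge> 1" and V1: "card V \<ge> 1"
    and sum: "(\<Sum>v\<in>V. d v) = 2 * (card V - 1)"
  shows "card {v\<in>V. d v = 1} = excess d V + 2"
proof -
  have "(\<Sum>v\<in>V. d v + (if d v = 1 then 1 else 0)) = (\<Sum>v\<in>V. (d v - 2) + 2)"
    by (rule sum.cong) (use pos in auto)
  then have "(\<Sum>v\<in>V. d v) + card {v\<in>V. d v = 1} = excess d V + 2 * card V"
    by (simp only: sum.distrib sum_indicator_const[OF fin] excess_def sum_constant) simp
  then show ?thesis using sum V1 by simp
qed

(* Summing the pair bound over all ordered pairs: each 1 contributes sum (d y - 1) = n - 2
   twice, each 2 contributes the excess twice. *)
lemma sum_pair_bound:
  assumes fin: "finite V" and pos: "\<forall>v\<in>V. d v \<ge> 1"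
    and sum: "(\<Sum>v\<in>V. d v) = 2 * (card V - 1)"
  shows "(\<Sum>x\<in>V. \<Sum>y\<in>V. pair_bound (d x) (d y))
       = 2 * card {v\<in>V. d v = 1} * (card V - 2) + 2 * card {v\<in>V. d v = 2} * excess d V"
proof -
  have "(\<Sum>y\<in>V. d y - 1) + card V = (\<Sum>y\<in>V. (d y - 1) + 1)"
    by (simp only: sum.distrib card_eq_sum)
  also have "\<dots> = (\<Sum>y\<in>V. d y)" using pos by (intro sum.cong) auto
  finally have sum1: "(\<Sum>y\<in>V. d y - 1) = card V - 2" using sum by simp
  have leaf_part: "(\<Sum>x\<in>V. \<Sum>y\<in>V. if d x = 1 then d y - 1 else 0) = card {v\<in>V. d v = 1} * (card V - 2)"
    using sum_sum_indicator[OF fin, where P="\<lambda>v. d v = 1" and B=V and f="\<lambda>y. d y - 1"] sum1 by simp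
  have degree_two_part: "(\<Sum>x\<in>V. \<Sum>y\<in>V. if d x = 2 then d y - 2 else 0) = card {v\<in>V. d v = 2} * excess d V"
    using sum_sum_indicator[OF fin, where P="\<lambda>v. d v = 2" and B=V and f="\<lambda>y. d y - 2"] by (simp add: excess_def)
  have "(\<Sum>x\<in>V. \<Sum>y\<in>V. pair_bound (d x) (d y))
      = 2 * (\<Sum>x\<in>V. \<Sum>y\<in>V. if d x = 1 then d y - 1 else 0)
      + 2 * (\<Sum>x\<in>V. \<Sum>y\<in>V. if d x = 2 then d y - 2 else 0)"
    unfolding pair_bound_def sum.distrib
    by (subst (2) sum.swap, subst (4) sum.swap) simp
  then show ?thesis using leaf_part degree_two_part by simp
qed

lemma excess_one:
  assumes fin: "finite V" and S1: "excess d V = 1"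
  shows "\<forall>v\<in>V. d v \<le> 3" and "card {v\<in>V. d v = 3} = 1"
proof -
  show le3: "\<forall>v\<in>V. d v \<le> 3"
  proof
    fix v assume "v \<in> V"
    then have "d v - 2 \<le> excess d V" unfolding excess_def by (rule member_le_sum) (use fin in auto)
    then show "d v \<le> 3" using S1 by simp
  qed
  have "excess d V = (\<Sum>v\<in>V. if d v = 3 then 1 else 0)"
    unfolding excess_def by (rule sum.cong) (use le3 in auto)
  then show "card {v\<in>V. d v = 3} = 1" using S1 by (simp add: sum_indicator_const[OF fin])
qed

lemma card_by_small_degree:
  assumes fin: "finite V" and range: "\<forall>v\<in>V. d v \<in> {1, 2, 3::nat}"
  shows "card V = card {v\<in>V. d v = 1} + card {v\<in>V. d v = 2} + card {v\<in>V. d v = 3}"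
proof -
  have "V = {v\<in>V. d v = 1} \<union> {v\<in>V. d v = 2} \<union> {v\<in>V. d v = 3}" using range by auto
  then have "card V = card ({v\<in>V. d v = 1} \<union> {v\<in>V. d v = 2} \<union> {v\<in>V. d v = 3})" by simp
  also have "\<dots> = card {v\<in>V. d v = 1} + card {v\<in>V. d v = 2} + card {v\<in>V. d v = 3}"
    using fin by (subst card_Un_disjoint; auto)+
  finally show ?thesis .
qed

(* Excess >= 2 gives the strict bound via the
   (excess + 2)(n - 2) leaf contribution; excess 1 makes the pair bound exact. *)
lemma irregularity_of_degree_sequence:
  fixes d :: "'a \<Rightarrow> nat"
  assumes fin: "finite V" and pos: "\<forall>v\<in>V. d v \<ge> 1"
    and sum: "(\<Sum>v\<in>V. d v) = 2 * (card V - 1)" and big: "\<exists>v\<in>V. d v \<ge> 3"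
  defines "D \<equiv> (\<Sum>x\<in>V. \<Sum>y\<in>V. \<bar>real (d x) - real (d y)\<bar>)"
  shows "D / 2 \<ge> 4 * real (card V) - 10 \<and>
         (D / 2 = 4 * real (card V) - 10 \<longleftrightarrow>
           card {v\<in>V. d v = 3} = 1 \<and> card {v\<in>V. d v = 2} = card V - 4 \<and>
           card {v\<in>V. d v = 1} = 3)"
proof -
  define n where "n = card V"
  define n1 where "n1 = card {v\<in>V. d v = 1}"
  define n2 where "n2 = card {v\<in>V. d v = 2}"
  define S where "S = excess d V"
  obtain v0 where v0: "v0 \<in> V" "d v0 \<ge> 3" using big by blast
  have "d v0 \<le> (\<Sum>v\<in>V. d v)" using v0(1) by (rule member_le_sum) (use fin in auto)
  then have n3: "n \<ge> 3" using v0 sum n_def by simp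
  have n1_S: "n1 = S + 2"
    unfolding n1_def S_def by (rule leaf_count[OF fin pos _ sum]) (use n3 n_def in simp)
  have "d v0 - 2 \<le> S" unfolding S_def excess_def using v0(1) by (rule member_le_sum) (use fin in auto)
  then have S_pos: "S \<ge> 1" using v0 by simp
  define H where "H = (\<Sum>x\<in>V. \<Sum>y\<in>V. pair_bound (d x) (d y))"
  have H_val: "H = 2 * n1 * (n - 2) + 2 * n2 * S"
    unfolding H_def n1_def n2_def S_def n_def by (rule sum_pair_bound[OF fin pos sum])
  have "real H \<le> D"
    unfolding H_def D_def of_nat_sum by (intro sum_mono pair_bound_le) (use pos in auto)
  then have lower: "D \<ge> 2 * (real n1 * (real n - 2)) + 2 * (real n2 * real S)"
    using H_val n3 by (simp add: of_nat_diff)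
  show ?thesis
  proof (cases "S \<ge> 2")
    case True
    have "4 * real n - 8 = 4 * (real n - 2)" by simp
    also have "\<dots> \<le> real n1 * (real n - 2)"
      using True n1_S n3 by (intro mult_right_mono) auto
    finally have "4 * real n - 8 \<le> real n1 * (real n - 2)" .
    moreover have "real n2 * real S \<ge> 0" by simp
    ultimately have "D / 2 > 4 * real n - 10" using lower by linarith
    moreover have "n1 \<noteq> 3" using n1_S True by simp
    ultimately show ?thesis unfolding n_def n1_def by auto
  next
    case False
    then have S1: "S = 1" using S_pos by simp
    note small = excess_one[OF fin S1[unfolded S_def]]
    have range: "\<forall>v\<in>V. d v \<in> {1, 2, 3}"
    proof
      fix v assume "v \<in> V"
      then have "1 \<le> d v" "d v \<le> 3" using pos small(1) by auto
      then show "d v \<in> {1, 2, 3}" by auto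
    qed
    have n_split: "n = n1 + n2 + 1"
      using card_by_small_degree[OF fin range] small(2) unfolding n_def n1_def n2_def by simp
    have n1_3: "n1 = 3" and n2_val: "n2 = n - 4" using n1_S S1 n_split by simp_all
    have "real H = D"
      unfolding H_def D_def of_nat_sum by (intro sum.cong refl pair_bound_eq) (use pos small(1) in auto)
    moreover have "H + 20 = 8 * n" using H_val n1_3 S1 n_split by simp
    ultimately have "D / 2 = 4 * real n - 10" by linarith
    then show ?thesis using small(2) n1_3 n2_val unfolding n_def n1_def n2_def by simp
  qed
qed

theorem theorem6:
  fixes V :: "'a set" and E :: "'a set set" and n :: nat
  assumes "tree V E" and "card V = n" and "n \<ge> 5" and "\<not> is_path_graph V E"
  shows "irr_t V E \<ge> 4 * real n - 10 \<and>
         (irr_t V E = 4 * real n - 10 \<longleftrightarrow>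
           (card {v\<in>V. degree E v = 3} = 1 \<and>
            card {v\<in>V. degree E v = 2} = n - 4 \<and>
            card {v\<in>V. degree E v = 1} = 3))"
proof -
  have fin: "finite V" using assms(1) unfolding tree_def simple_graph_def by auto
  have pos: "\<forall>v\<in>V. degree E v \<ge> 1" using tree_degree_pos[OF assms(1)] assms(2,3) by auto
  have big: "\<exists>v\<in>V. degree E v \<ge> 3"
    using tree_max_degree_two_is_path[OF assms(1)] assms(4) by force
  show ?thesis
    using irregularity_of_degree_sequence[OF fin pos tree_degree_sum[OF assms(1)] big] assms(2)
    unfolding irr_t_def by simp
qed

end
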